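(* Let $\mathbb{F}$ be an algebraically closed field with $\mathrm{char}\,\mathbb{F}=2$, and let $\mathcal{A}$ be a (not necessarily unital) subalgebra of $\mathbf{O}$ with $\mathcal{A}\not\subseteq\mathbf{O}_0$ and $\dim\mathcal{A}\ge2$. Then there exists $g\in{\rm G}_2$ such that one of the following holds: (a) $\{e_1,\mathbf{u}_1\}\subseteq g\mathcal{A}$; (b) $\{e_1,\mathbf{v}_1\}\subseteq g\mathcal{A}$; (c) $\{e_1,e_2\}\subseteq g\mathcal{A}$.
   Context: The split octonion algebra $\mathbf{O}$ is the 8-dimensional $\mathbb{F}$-vector space of formal matrices $a=\begin{pmatrix}\alpha&\mathbf{u}\\ \mathbf{v}&\beta\end{pmatrix}$ with $\alpha,\beta\in\mathbb{F}$, $\mathbf{u},\mathbf{v}\in\mathbb{F}^3$, with multiplication $\begin{pmatrix}\alpha&\mathbf{u}\\ \mathbf{v}&\beta\end{pmatrix}\begin{pmatrix}\alpha'&\mathbf{u}'\\ \mathbf{v}'&\beta'\end{pmatrix}=\begin{pmatrix}\alpha\alpha'+\mathbf{u}\cdot\mathbf{v}'&\alpha\mathbf{u}'+\beta'\mathbf{u}-\mathbf{v}\times\mathbf{v}'\\ \alpha'\mathbf{v}+\beta\mathbf{v}'+\mathbf{u}\times\mathbf{u}'&\beta\beta'+\mathbf{v}\cdot\mathbf{u}'\end{pmatrix}$ (dot product and cross product on $\mathbb{F}^3$). Trace $\mathrm{tr}(a)=\alpha+\beta$, $\mathbf{O}_0=\{a\in\mathbf{O}\mid\mathrm{tr}(a)=0\}$.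 With $\mathbf{c}_1$ the first standard basis vector of $\mathbb{F}^3$: $e_1$ has $\alpha=1$ and all else $0$, $e_2$ has $\beta=1$ and all else $0$, $\mathbf{u}_1$ has $\mathbf{u}=\mathbf{c}_1$ and all else $0$, $\mathbf{v}_1$ has $\mathbf{v}=\mathbf{c}_1$ and all else $0$. ${\rm G}_2=\mathrm{Aut}(\mathbf{O})$. *)

theory Defs
  imports Main "HOL-Library.Product_Plus" "HOL-Computational_Algebra.Polynomial"
begin

text \<open>Vectors in F^3 as triples; an octonion (alpha, u, v, beta) is the formal
matrix with diagonal alpha, beta and off-diagonal vectors u (top right), v (bottom left).\<close>

type_synonym 'a vec3 = "'a \<times> 'a \<times> 'a"
type_synonym 'a oct = "'a \<times> 'a vec3 \<times> 'a vec3 \<times> 'a"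

fun vsc :: "'a::field \<Rightarrow> 'a vec3 \<Rightarrow> 'a vec3" where
  "vsc c (x1, x2, x3) = (c * x1, c * x2, c * x3)"

fun dot3 :: "'a::field vec3 \<Rightarrow> 'a vec3 \<Rightarrow> 'a" where
  "dot3 (x1, x2, x3) (y1, y2, y3) = x1 * y1 + x2 * y2 + x3 * y3"

fun cross3 :: "'a::field vec3 \<Rightarrow> 'a vec3 \<Rightarrow> 'a vec3" where
  "cross3 (x1, x2, x3) (y1, y2, y3) =
     (x2 * y3 - x3 * y2, x3 * y1 - x1 * y3, x1 * y2 - x2 * y1)"

fun oct_scale :: "'a::field \<Rightarrow> 'a oct \<Rightarrow> 'a oct" where
  "oct_scale c (a, u, v, b) = (c * a, vsc c u, vsc c v, c * b)"

fun oct_mult :: "'a::field oct \<Rightarrow> 'a oct \<Rightarrow> 'a oct" where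
  "oct_mult (a, u, v, b) (a', u', v', b') =
     (a * a' + dot3 u v',
      vsc a u' + vsc b' u - cross3 v v',
      vsc a' v + vsc b v' + cross3 u u',
      b * b' + dot3 v u')"

fun oct_tr :: "'a::field oct \<Rightarrow> 'a" where
  "oct_tr (a, u, v, b) = a + b"

definition c1 :: "'a::field vec3" where "c1 = (1, 0, 0)"

definition e1 :: "'a::field oct" where "e1 = (1, 0, 0, 0)"
definition e2 :: "'a::field oct" where "e2 = (0, 0, 0, 1)"
definition u1 :: "'a::field oct" where "u1 = (0, c1, 0, 0)"
definition v1 :: "'a::field oct" where "v1 = (0, 0, c1, 0)"

lemma vsc_simps:
  "vsc a (x + y) = vsc a x + vsc a y"
  "vsc (a + b) x = vsc a x + vsc b x"
  "vsc a (vsc b x) = vsc (a * b) x"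
  "vsc 1 x = x"
  by (cases x; cases y; simp add: algebra_simps)+

global_interpretation oct: vector_space "oct_scale :: 'a::field \<Rightarrow> 'a oct \<Rightarrow> 'a oct"
  by unfold_locales (auto simp: algebra_simps vsc_simps)

definition oct0 :: "'a::field oct set" where
  "oct0 = {a. oct_tr a = 0}"

definition oct_subalgebra :: "'a::field oct set \<Rightarrow> bool" where
  "oct_subalgebra A \<longleftrightarrow> oct.subspace A \<and> (\<forall>x\<in>A. \<forall>y\<in>A. oct_mult x y \<in> A)"

definition G2 :: "('a::field oct \<Rightarrow> 'a oct) set" where
  "G2 = {g. bij g \<and> Vector_Spaces.linear oct_scale oct_scale g
            \<and> (\<forall>x y. g (oct_mult x y) = oct_mult (g x) (g y))}"

definition alg_closed_field :: "'a::field itself \<Rightarrow> bool" where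
  "alg_closed_field _ \<longleftrightarrow> (\<forall>p :: 'a poly. degree p > 0 \<longrightarrow> (\<exists>x. poly p x = 0))"

end

theory Submission
  imports Defs
begin

text \<open>Scaling an element of A of nonzero trace gives y = (alpha, u, v, beta) with
  alpha + beta = 1, hence alpha - beta = 1 in characteristic 2. The unipotent automorphism
  shearing along t u rescales u by 1 + t - (u.v) t^2, and this polynomial in t has a root
  since the field is algebraically closed; a second shear then removes v, leaving a diagonal element (a, 0, 0, b)
  with a \<noteq> b. Combining it with its square yields e1 or e2, and after the swap
  automorphism e1, in the image of A. Multiplying an element of the image outside F e1 by e1 on
  either side isolates its Peirce components. One of them is nonzero: it gives e2 directly, or
  SL3, acting on the off-diagonal parts while fixing e1, moves it to u1 or v1.\<close>

lemma zero_vec3: "(0 :: 'a::field vec3) = (0, 0, 0)"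
  by (simp add: zero_prod_def)

lemma vec3_zero_simps [simp]:
  fixes x :: "'a::field vec3"
  shows "dot3 0 x = 0" "dot3 x 0 = 0" "cross3 0 x = 0" "cross3 x 0 = 0"
    "vsc c 0 = 0" "vsc 0 x = 0" "cross3 x x = 0"
  by (cases x; simp add: zero_vec3)+

lemma oct_cases:
  obtains a x1 x2 x3 y1 y2 y3 b where "z = (a, (x1, x2, x3), (y1, y2, y3), b)"
  by (metis prod.exhaust)

lemma G2I:
  fixes g :: "'a::field oct \<Rightarrow> 'a oct"
  assumes "\<And>x. h (g x) = x" "\<And>x. g (h x) = x"
    and "\<And>x y. g (x + y) = g x + g y" "\<And>c x. g (oct_scale c x) = oct_scale c (g x)"
    and "\<And>x y. g (oct_mult x y) = oct_mult (g x) (g y)"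
  shows "g \<in> G2"
proof -
  have "bij g"
    by (metis assms(1,2) bijI injI surjI)
  moreover have "Vector_Spaces.linear oct_scale oct_scale g"
    using assms(3,4) by (simp add: Vector_Spaces.linear_iff oct.vector_space_axioms)
  ultimately show ?thesis
    using assms(5) unfolding G2_def by blast
qed

lemma id_in_G2: "id \<in> G2"
  by (rule G2I[where h = id]) auto

lemma G2_comp: "g \<in> G2 \<Longrightarrow> h \<in> G2 \<Longrightarrow> h \<circ> g \<in> G2"
  unfolding G2_def
  using bij_comp Vector_Spaces.linear_compose[of oct_scale oct_scale g oct_scale h]
  by (simp only: mem_Collect_eq o_apply) blast

lemma G2_linear: "g \<in> G2 \<Longrightarrow> Vector_Spaces.linear oct_scale oct_scale g"
  unfolding G2_def by blast

lemma G2_scale: "g \<in> G2 \<Longrightarrow> g (oct_scale c x) = oct_scale c (g x)"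
  using G2_linear unfolding Vector_Spaces.linear_iff by blast

lemma G2_mult: "g \<in> G2 \<Longrightarrow> g (oct_mult x y) = oct_mult (g x) (g y)"
  unfolding G2_def by blast

lemma G2_bij: "g \<in> G2 \<Longrightarrow> bij g"
  unfolding G2_def by blast

lemma G2_image_subalgebra:
  assumes "g \<in> G2" and "oct_subalgebra A"
  shows "oct_subalgebra (g ` A)"
proof -
  have "oct.subspace (g ` A)"
    using module_hom.subspace_image[OF module_hom_linearI[OF G2_linear[OF assms(1)]]] assms(2)
    unfolding oct_subalgebra_def by blast
  moreover have "oct_mult (g x) (g y) \<in> g ` A" if "x \<in> A" "y \<in> A" for x y
    using that assms G2_mult[of g x y] unfolding oct_subalgebra_def by (metis imageI)
  ultimately show ?thesis
    unfolding oct_subalgebra_def by blast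
qed

lemma G2_ex_image_comp:
  assumes "g \<in> G2" and "\<exists>f\<in>G2. P (f ` g ` A)"
  shows "\<exists>f\<in>G2. P (f ` A)"
proof -
  from assms(2) obtain f where "f \<in> G2" and "P (f ` g ` A)"
    by blast
  then show ?thesis
    using G2_comp[OF assms(1) \<open>f \<in> G2\<close>] by (intro bexI[of _ "f \<circ> g"]) (simp_all add: image_comp)
qed

lemma G2_image_span_singleton:
  assumes "g \<in> G2"
  shows "g ` oct.span {x} = oct.span {g x}"
proof -
  have "g ` range (\<lambda>c. oct_scale c x) = range (\<lambda>c. oct_scale c (g x))"
    unfolding image_image G2_scale[OF assms] ..
  then show ?thesis
    by (simp only: oct.span_singleton)
qed

lemma G2_image_not_subset_span_singleton:
  assumes "g \<in> G2" and "oct.dim A \<ge> 2"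
  shows "\<not> g ` A \<subseteq> oct.span {x}"
proof
  assume sub: "g ` A \<subseteq> oct.span {x}"
  obtain z where "x = g z"
    using G2_bij[OF assms(1)] by (metis bij_pointE)
  with sub have "g ` A \<subseteq> g ` oct.span {z}"
    by (simp add: G2_image_span_singleton[OF assms(1)])
  then have "A \<subseteq> oct.span {z}"
    using bij_is_inj[OF G2_bij[OF assms(1)]] by (simp add: inj_image_subset_iff)
  then have "oct.dim A \<le> card {z}"
    by (intro oct.dim_le_card) auto
  with assms(2) show False
    by simp
qed

fun oct_shear_u :: "'a::field vec3 \<Rightarrow> 'a oct \<Rightarrow> 'a oct" where
  "oct_shear_u p (a, u, v, b) =
     (a - dot3 p v, u + vsc (a - b) p - vsc (dot3 p v) p, v + cross3 p u, b + dot3 p v)"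

fun oct_shear_v :: "'a::field vec3 \<Rightarrow> 'a oct \<Rightarrow> 'a oct" where
  "oct_shear_v q (a, u, v, b) =
     (a - dot3 q u, u + cross3 q v, v + vsc (a - b) q - vsc (dot3 q u) q, b + dot3 q u)"

fun oct_swap :: "'a::field oct \<Rightarrow> 'a oct" where
  "oct_swap (a, u, v, b) = (b, - v, - u, a)"

lemma oct_shear_u_in_G2: "oct_shear_u p \<in> G2"
proof (rule G2I[where h = "oct_shear_u (- p)"])
  show "oct_shear_u (- p) (oct_shear_u p x) = x" "oct_shear_u p (oct_shear_u (- p) x) = x" for x
    by (cases x rule: oct_cases; cases p; simp add: algebra_simps)+
qed (cases p; auto elim!: oct_cases simp: algebra_simps)+

lemma oct_shear_v_in_G2: "oct_shear_v q \<in> G2"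
proof (rule G2I[where h = "oct_shear_v (- q)"])
  show "oct_shear_v (- q) (oct_shear_v q x) = x" "oct_shear_v q (oct_shear_v (- q) x) = x" for x
    by (cases x rule: oct_cases; cases q; simp add: algebra_simps)+
qed (cases q; auto elim!: oct_cases simp: algebra_simps)+

lemma oct_swap_in_G2: "oct_swap \<in> G2"
  by (rule G2I[where h = oct_swap]) (auto elim!: oct_cases simp: algebra_simps)

lemma oct_swap_e2 [simp]: "oct_swap e2 = e1"
  by (simp add: e1_def e2_def)

type_synonym 'a mat3 = "'a vec3 \<times> 'a vec3 \<times> 'a vec3"

fun mat3_vec_mult :: "'a::field mat3 \<Rightarrow> 'a vec3 \<Rightarrow> 'a vec3" where
  "mat3_vec_mult (r1, r2, r3) x = (dot3 r1 x, dot3 r2 x, dot3 r3 x)"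

fun mat3_transpose :: "'a::field mat3 \<Rightarrow> 'a mat3" where
  "mat3_transpose ((a, b, c), (d, e, f), (g, h, i)) = ((a, d, g), (b, e, h), (c, f, i))"

fun mat3_cofactor :: "'a::field mat3 \<Rightarrow> 'a mat3" where
  "mat3_cofactor (r1, r2, r3) = (cross3 r2 r3, cross3 r3 r1, cross3 r1 r2)"

fun mat3_det :: "'a::field mat3 \<Rightarrow> 'a" where
  "mat3_det (r1, r2, r3) = dot3 r1 (cross3 r2 r3)"

text \<open>For det M = 1 the cofactor matrix is the inverse transpose of M,
  so M acts on the v-part by the contragredient representation.\<close>

fun oct_sl3 :: "'a::field mat3 \<Rightarrow> 'a oct \<Rightarrow> 'a oct" where
  "oct_sl3 M (a, u, v, b) = (a, mat3_vec_mult M u, mat3_vec_mult (mat3_cofactor M) v, b)"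

lemma mat3_cases:
  obtains a b c d e f g h i where "M = ((a, b, c), (d, e, f), (g, h, i))"
  by (metis prod.exhaust)

lemma mat3_vec_mult_linear:
  "mat3_vec_mult M (x + y) = mat3_vec_mult M x + mat3_vec_mult M y"
  "mat3_vec_mult M (x - y) = mat3_vec_mult M x - mat3_vec_mult M y"
  "mat3_vec_mult M (vsc c x) = vsc c (mat3_vec_mult M x)"
  by (cases M rule: mat3_cases; cases x; cases y; simp add: algebra_simps)+

lemma mat3_vec_mult_zero [simp]: "mat3_vec_mult M 0 = 0"
  by (cases M rule: mat3_cases) (simp add: zero_vec3)

lemma mat3_cofactor_identities:
  "dot3 (mat3_vec_mult M u) (mat3_vec_mult (mat3_cofactor M) v) = mat3_det M * dot3 u v"
  "dot3 (mat3_vec_mult (mat3_cofactor M) v) (mat3_vec_mult M u) = mat3_det M * dot3 v u"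
  "cross3 (mat3_vec_mult M u) (mat3_vec_mult M v) = mat3_vec_mult (mat3_cofactor M) (cross3 u v)"
  "mat3_vec_mult (mat3_cofactor (mat3_cofactor M)) u = vsc (mat3_det M) (mat3_vec_mult M u)"
  "mat3_det (mat3_cofactor M) = mat3_det M ^ 2"
  by (cases M rule: mat3_cases; cases u; cases v; simp add: algebra_simps power2_eq_square)+

lemma mat3_inverse_identities:
  "mat3_vec_mult (mat3_transpose (mat3_cofactor M)) (mat3_vec_mult M u) = vsc (mat3_det M) u"
  "mat3_vec_mult M (mat3_vec_mult (mat3_transpose (mat3_cofactor M)) u) = vsc (mat3_det M) u"
  "mat3_vec_mult (mat3_transpose M) (mat3_vec_mult (mat3_cofactor M) u) = vsc (mat3_det M) u"
  "mat3_vec_mult (mat3_cofactor M) (mat3_vec_mult (mat3_transpose M) u) = vsc (mat3_det M) u"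
  by (cases M rule: mat3_cases; cases u; simp add: algebra_simps)+

lemma oct_sl3_in_G2:
  assumes "mat3_det M = 1"
  shows "oct_sl3 M \<in> G2"
proof (rule G2I[where h = "\<lambda>(a, u, v, b).
    (a, mat3_vec_mult (mat3_transpose (mat3_cofactor M)) u, mat3_vec_mult (mat3_transpose M) v, b)"])
  show "oct_sl3 M (x + y) = oct_sl3 M x + oct_sl3 M y" for x y
    by (cases x; cases y; simp add: mat3_vec_mult_linear)
  show "oct_sl3 M (oct_scale c x) = oct_scale c (oct_sl3 M x)" for c x
    by (cases x; simp add: mat3_vec_mult_linear)
  show "oct_sl3 M (oct_mult x y) = oct_mult (oct_sl3 M x) (oct_sl3 M y)" for x y
    by (cases x; cases y; simp add: mat3_vec_mult_linear mat3_cofactor_identities assms vsc_simps)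
qed (auto simp: mat3_inverse_identities assms vsc_simps)

lemma oct_sl3_e1 [simp]: "oct_sl3 M e1 = e1"
  by (cases M rule: mat3_cases) (simp add: e1_def zero_vec3)

lemma sl3_maps_to_c1:
  assumes "(u :: 'a::field vec3) \<noteq> 0"
  obtains M where "mat3_det M = 1" and "mat3_vec_mult M u = c1"
proof -
  obtain x y z where u: "u = (x, y, z)"
    by (cases u) auto
  consider "x \<noteq> 0" | "x = 0" "y \<noteq> 0" | "x = 0" "y = 0" "z \<noteq> 0"
    using assms u by (auto simp: zero_vec3)
  then show thesis
  proof cases
    case 1
    then show thesis
      by (intro that[of "((1/x, 0, 0), (-y, x, 0), (-z/x, 0, 1))"]) (simp_all add: u c1_def field_simps)
  next
    case 2
    then show thesis
      by (intro that[of "((0, 1/y, 0), (-y, 0, 0), (0, -z/y, 1))"]) (simp_all add: u c1_def field_simps)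
  next
    case 3
    then show thesis
      by (intro that[of "((0, 0, 1/z), (0, 1, 0), (-z, 0, 0))"]) (simp_all add: u c1_def field_simps)
  qed
qed

lemma G2_maps_to_u1:
  assumes "u \<noteq> 0"
  obtains g where "g \<in> G2" "g e1 = e1" "g (0, u, 0, 0) = u1"
proof -
  obtain M where "mat3_det M = 1" "mat3_vec_mult M u = c1"
    using sl3_maps_to_c1[OF assms] .
  then show thesis
    by (intro that[of "oct_sl3 M"] oct_sl3_in_G2) (simp_all add: u1_def)
qed

text \<open>The cofactor matrix of a matrix sending v to c1 does the job on the
  v-part, since the cofactor of the cofactor is the matrix itself when det M = 1.\<close>

lemma G2_maps_to_v1:
  assumes "v \<noteq> 0"
  obtains g where "g \<in> G2" "g e1 = e1" "g (0, 0, v, 0) = v1"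
proof -
  obtain M where M: "mat3_det M = 1" "mat3_vec_mult M v = c1"
    using sl3_maps_to_c1[OF assms] .
  then have "mat3_vec_mult (mat3_cofactor (mat3_cofactor M)) v = c1"
    by (simp add: mat3_cofactor_identities vsc_simps)
  moreover have "mat3_det (mat3_cofactor M) = 1"
    using M by (simp add: mat3_cofactor_identities)
  ultimately show thesis
    by (intro that[of "oct_sl3 (mat3_cofactor M)"] oct_sl3_in_G2) (simp_all add: v1_def)
qed

lemma subalgebra_Peirce_components:
  fixes B :: "'a::field oct set"
  assumes B: "oct_subalgebra B" and "e1 \<in> B" and w: "(a, u, v, b) \<in> B"
  shows "(0, u, 0, 0) \<in> B" and "(0, 0, v, 0) \<in> B" and "(0, 0, 0, b) \<in> B"
proof -
  have sub: "oct.subspace B" and mult: "\<And>x y. x \<in> B \<Longrightarrow> y \<in> B \<Longrightarrow> oct_mult x y \<in> B"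
    using B unfolding oct_subalgebra_def by auto
  have left: "(a, u, 0, 0) \<in> B"
    using mult[OF \<open>e1 \<in> B\<close> w] by (simp add: e1_def vsc_simps)
  have right: "(a, 0, v, 0) \<in> B"
    using mult[OF w \<open>e1 \<in> B\<close>] by (simp add: e1_def vsc_simps)
  have both: "(a, 0, 0, 0) \<in> B"
    using mult[OF left \<open>e1 \<in> B\<close>] by (simp add: e1_def vsc_simps)
  have "(0, u, 0, 0) = (a, u, 0, 0) - ((a, 0, 0, 0) :: 'a oct)"
    by (simp add: zero_prod_def)
  then show "(0, u, 0, 0) \<in> B"
    using oct.subspace_diff[OF sub left both] by metis
  have "(0, 0, v, 0) = (a, 0, v, 0) - ((a, 0, 0, 0) :: 'a oct)"
    by (simp add: zero_prod_def)
  then show "(0, 0, v, 0) \<in> B"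
    using oct.subspace_diff[OF sub right both] by metis
  have "(0, 0, 0, b) = (a, u, v, b) - (a, u, 0, 0) - (a, 0, v, 0) + ((a, 0, 0, 0) :: 'a oct)"
    by (simp add: zero_prod_def)
  then show "(0, 0, 0, b) \<in> B"
    using oct.subspace_add[OF sub oct.subspace_diff[OF sub oct.subspace_diff[OF sub w left] right] both]
    by metis
qed

lemma subalgebra_containing_e1:
  assumes B: "oct_subalgebra B" and "e1 \<in> B" and "w \<in> B" and "w \<notin> oct.span {e1}"
  shows "\<exists>g\<in>G2. {e1, u1} \<subseteq> g ` B \<or> {e1, v1} \<subseteq> g ` B \<or> {e1, e2} \<subseteq> g ` B"
proof -
  obtain a u v b where w: "w = (a, u, v, b)"
    by (cases w) auto
  note components = subalgebra_Peirce_components[OF B \<open>e1 \<in> B\<close> \<open>w \<in> B\<close>[unfolded w]]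
  have "w \<noteq> oct_scale a e1"
    using \<open>w \<notin> oct.span {e1}\<close> by (auto simp: oct.span_singleton)
  then consider "u \<noteq> 0" | "v \<noteq> 0" | "b \<noteq> 0"
    by (fastforce simp: w e1_def)
  then show ?thesis
  proof cases
    case 1
    then obtain g where "g \<in> G2" "g e1 = e1" "g (0, u, 0, 0) = u1"
      by (rule G2_maps_to_u1)
    then show ?thesis
      using \<open>e1 \<in> B\<close> components(1) by (metis empty_subsetI image_eqI insert_subset)
  next
    case 2
    then obtain g where "g \<in> G2" "g e1 = e1" "g (0, 0, v, 0) = v1"
      by (rule G2_maps_to_v1)
    then show ?thesis
      using \<open>e1 \<in> B\<close> components(2) by (metis empty_subsetI image_eqI insert_subset)
  next
    case 3
    have "oct_scale (1 / b) (0, 0, 0, b) \<in> B"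
      using B components(3) unfolding oct_subalgebra_def by (blast intro: oct.subspace_scale)
    then have "e2 \<in> B"
      using 3 by (simp add: e2_def)
    then show ?thesis
      using \<open>e1 \<in> B\<close> by (intro bexI[OF _ id_in_G2]) simp
  qed
qed

lemma subalgebra_diagonal_idempotents:
  fixes B :: "'a::field oct set"
  assumes B: "oct_subalgebra B" and z: "(a, 0, 0, b) \<in> B" and "a \<noteq> b"
  shows "a \<noteq> 0 \<Longrightarrow> e1 \<in> B" and "b \<noteq> 0 \<Longrightarrow> e2 \<in> B"
proof -
  have sub: "oct.subspace B"
    using B unfolding oct_subalgebra_def by blast
  have "oct_mult (a, 0, 0, b) (a, 0, 0, b) \<in> B"
    using B z unfolding oct_subalgebra_def by blast
  then have sq: "(a * a, 0, 0, b * b) \<in> B"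
    by simp
  show "e1 \<in> B" if "a \<noteq> 0"
  proof -
    have "oct_scale (1 / (a * (b - a))) (oct_scale b (a, 0, 0, b) - (a * a, 0, 0, b * b)) \<in> B"
      by (intro oct.subspace_scale[OF sub] oct.subspace_diff[OF sub] sq z)
    then show ?thesis
      using that \<open>a \<noteq> b\<close> by (simp add: e1_def zero_prod_def field_simps)
  qed
  show "e2 \<in> B" if "b \<noteq> 0"
  proof -
    have "oct_scale (1 / (b * (a - b))) (oct_scale a (a, 0, 0, b) - (a * a, 0, 0, b * b)) \<in> B"
      by (intro oct.subspace_scale[OF sub] oct.subspace_diff[OF sub] sq z)
    then show ?thesis
      using that \<open>a \<noteq> b\<close> by (simp add: e2_def zero_prod_def field_simps)
  qed
qed

lemma G2_image_contains_e1_of_diagonal: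
  fixes B :: "'a::field oct set"
  assumes "oct_subalgebra B" and "(a, 0, 0, b) \<in> B" and "a \<noteq> b"
  obtains g where "g \<in> G2" and "e1 \<in> g ` B"
proof (cases "a = 0")
  case True
  with assms have "e2 \<in> B"
    by (intro subalgebra_diagonal_idempotents(2)) auto
  then show thesis
    by (intro that[OF oct_swap_in_G2]) (metis oct_swap_e2 imageI)
next
  case False
  with assms have "e1 \<in> B"
    by (intro subalgebra_diagonal_idempotents(1))
  then show thesis
    by (intro that[OF id_in_G2]) simp
qed

lemma alg_closed_field_quadratic_root:
  fixes a b c :: "'a::field"
  assumes "alg_closed_field TYPE('a)" and "b \<noteq> 0"
  obtains t where "a + b * t + c * t * t = 0"
proof -
  have "coeff [:a, b, c:] 1 \<noteq> 0"
    using assms(2) by simp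
  then have "degree [:a, b, c:] > 0"
    using le_degree by fastforce
  then obtain t where "poly [:a, b, c:] t = 0"
    using assms(1) unfolding alg_closed_field_def by blast
  then show thesis
    by (intro that[of t]) (simp add: algebra_simps)
qed

lemma oct_shear_u_along_u:
  "oct_shear_u (vsc t u) (\<alpha>, u, v, \<beta>) =
     (\<alpha> - t * dot3 u v, vsc (1 + (\<alpha> - \<beta>) * t - t * t * dot3 u v) u, v, \<beta> + t * dot3 u v)"
  by (cases u; cases v; simp add: algebra_simps)

lemma oct_shear_v_clears_v:
  assumes "a - b = 1"
  shows "oct_shear_v (- v) (a, 0, v, b) = (a, 0, 0, b)"
  using assms by (cases v; simp add: zero_vec3)

lemma G2_diagonalizes_trace_one:
  fixes y :: "'a::field oct"
  assumes "alg_closed_field TYPE('a)" and "CHAR('a) = 2" and "oct_tr y = 1"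
  obtains g a b where "g \<in> G2" and "g y = (a, 0, 0, b)" and "a + b = 1"
proof -
  obtain \<alpha> u v \<beta> where y: "y = (\<alpha>, u, v, \<beta>)"
    by (cases y) auto
  have "\<alpha> - \<beta> = 1"
    using assms(3) minus_CHAR_2[OF assms(2), of \<alpha> \<beta>] by (simp add: y)
  obtain t where t: "1 + 1 * t + (- dot3 u v) * t * t = 0"
    by (rule alg_closed_field_quadratic_root[OF assms(1) one_neq_zero])
  define a b where "a = \<alpha> - t * dot3 u v" and "b = \<beta> + t * dot3 u v"
  have "1 + (\<alpha> - \<beta>) * t - t * t * dot3 u v = 0"
    using t \<open>\<alpha> - \<beta> = 1\<close> by simp
  then have shear_u: "oct_shear_u (vsc t u) y = (a, 0, v, b)"
    unfolding y oct_shear_u_along_u a_def b_def by simp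
  have "a + b = 1"
    using assms(3) by (simp add: y a_def b_def)
  then have "oct_shear_v (- v) (a, 0, v, b) = (a, 0, 0, b)"
    using minus_CHAR_2[OF assms(2), of a b] by (intro oct_shear_v_clears_v) simp
  with shear_u have "(oct_shear_v (- v) \<circ> oct_shear_u (vsc t u)) y = (a, 0, 0, b)"
    by simp
  then show thesis
    using that G2_comp[OF oct_shear_u_in_G2 oct_shear_v_in_G2] \<open>a + b = 1\<close> by blast
qed

lemma subspace_obtains_trace_one:
  assumes "oct.subspace A" and "\<not> A \<subseteq> oct0"
  obtains y where "y \<in> A" and "oct_tr y = 1"
proof -
  obtain x where "x \<in> A" and "oct_tr x \<noteq> 0"
    using assms(2) unfolding oct0_def by blast
  moreover have "oct_tr (oct_scale (1 / oct_tr x) x) = 1"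
    using \<open>oct_tr x \<noteq> 0\<close> by (cases x) (simp add: add_divide_distrib[symmetric])
  ultimately show thesis
    using that oct.subspace_scale[OF assms(1)] by blast
qed

lemma G2_image_contains_e1:
  fixes A :: "'a::field oct set"
  assumes "alg_closed_field TYPE('a)" and "CHAR('a) = 2"
    and A: "oct_subalgebra A" and "\<not> A \<subseteq> oct0"
  obtains g where "g \<in> G2" and "e1 \<in> g ` A"
proof -
  obtain y where "y \<in> A" and "oct_tr y = 1"
    using A assms(4) unfolding oct_subalgebra_def by (blast elim: subspace_obtains_trace_one)
  then obtain g a b where g: "g \<in> G2" "g y = (a, 0, 0, b)" and "a + b = 1"
    by (elim G2_diagonalizes_trace_one[OF assms(1,2)])
  have "(a, 0, 0, b) \<in> g ` A"
    using g \<open>y \<in> A\<close> by (metis imageI)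
  moreover have "a \<noteq> b"
    using minus_CHAR_2[OF assms(2), of a b] \<open>a + b = 1\<close> by auto
  ultimately obtain h where "h \<in> G2" and "e1 \<in> h ` g ` A"
    by (rule G2_image_contains_e1_of_diagonal[OF G2_image_subalgebra[OF g(1) A]])
  then show thesis
    using that[OF G2_comp[OF g(1)]] by (simp add: image_comp)
qed

theorem lemma6p10:
  fixes A :: "'a::field oct set"
  assumes "alg_closed_field TYPE('a)"
    and "CHAR('a) = 2"
    and "oct_subalgebra A"
    and "\<not> A \<subseteq> oct0"
    and "oct.dim A \<ge> 2"
  shows "\<exists>g\<in>G2. {e1, u1} \<subseteq> g ` A \<or> {e1, v1} \<subseteq> g ` A \<or> {e1, e2} \<subseteq> g ` A"
proof -
  obtain g where g: "g \<in> G2" and e1: "e1 \<in> g ` A"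
    by (rule G2_image_contains_e1[OF assms(1-4)])
  obtain w where "w \<in> g ` A" and "w \<notin> oct.span {e1}"
    using G2_image_not_subset_span_singleton[OF g assms(5)] by blast
  let ?normal_form = "\<lambda>B. {e1, u1} \<subseteq> B \<or> {e1, v1} \<subseteq> B \<or> {e1, e2} \<subseteq> B"
  have "\<exists>f\<in>G2. ?normal_form (f ` g ` A)"
    using subalgebra_containing_e1[OF G2_image_subalgebra[OF g assms(3)] e1] \<open>w \<in> _\<close> \<open>w \<notin> _\<close> .
  then show ?thesis
    by (rule G2_ex_image_comp[OF g, of ?normal_form])
qed

end
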